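(* Let $n$ be a nonnegative integer and let $a,b,c\in\mathbb{C}$ be such that all hypergeometric series and quotients below are defined (no lower parameter is zero or a negative integer). Then \[ {}_4F_3\!\left(\left.{-n,a,a-c-n,c \atop \frac{a-n}{2},\frac{1+a-n}{2},b}\right| \frac{1}{4}\right) =\frac{(1+c-a)_n(b-c)_n}{(1-a)_n(b)_n}\, {}_4F_3\!\left(\left.{-n,1+c-b,1-b-n,c \atop \frac{1+c-b-n}{2},\frac{2+c-b-n}{2},1+c-a}\right| \frac{1}{4}\right). \]
   Context: For $a\in\mathbb{C}$, $(a)_0=1$ and $(a)_k=a(a+1)\cdots(a+k-1)$ for $k\ge1$. The hypergeometric series is ${}_rF_s\!\left(\left.{\alpha_1,\ldots,\alpha_r\atop \beta_1,\ldots,\beta_s}\right|z\right)=\sum_{k\ge0}\frac{(\alpha_1)_k\cdots(\alpha_r)_k}{k!(\beta_1)_k\cdots(\beta_s)_k}z^k$, with no lower parameter zero or a negative integer; when an upper parameter is $-n$ it is a finite sum over $0\le k\le n$. *)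

theory Defs
  imports Complex_Main
begin

definition hyp_term :: "complex list \<Rightarrow> complex list \<Rightarrow> complex \<Rightarrow> nat \<Rightarrow> complex" where
  "hyp_term as bs z k =
     (\<Prod>a\<leftarrow>as. pochhammer a k) / (fact k * (\<Prod>b\<leftarrow>bs. pochhammer b k)) * z ^ k"

definition hypergeom :: "complex list \<Rightarrow> complex list \<Rightarrow> complex \<Rightarrow> complex" where
  "hypergeom as bs z = (\<Sum>k. hyp_term as bs z k)"

definition admissible_lower :: "complex \<Rightarrow> bool" where
  "admissible_lower b \<longleftrightarrow> (\<forall>m::nat. b \<noteq> - of_nat m)"

end

theory Submission
  imports Defs "HOL-Computational_Algebra.Formal_Power_Series"
begin

text \<open>By the duplication formula (x/2)_k ((1+x)/2)_k 4^k = (x)_(2k) and the Chu-Vandermonde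
summation, (1-a)_n times the k-th term of the left 4F3 is (1+c-a)_n times the k-th row of the
terminating double series  sum_(k,j) (-n)_(k+j) (c)_(k+j) / (k! j! (b)_k (1+c-a)_j).
The right 4F3 is the left one at (a, b) := (1+c-b, 1+c-a), so it produces the same double
series with the roles of its denominators (b)_k and (1+c-a)_j exchanged; the series is
symmetric in them.\<close>

lemma pochhammer_reflect:
  "pochhammer (1 - x - of_nat k) k = (-1) ^ k * (pochhammer x k :: 'a::comm_ring_1)"
  using pochhammer_minus'[of "- x" k] by (simp add: algebra_simps)

lemma pochhammer_double_halves:
  fixes x :: "'a::field_char_0"
  shows "pochhammer (x / 2) k * pochhammer ((1 + x) / 2) k * 4 ^ k = pochhammer x (2 * k)"
proof -
  have "(1 + x) / 2 = x / 2 + 1 / 2"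
    by (simp add: add_divide_distrib)
  moreover have "(4 :: 'a) ^ k = 2 ^ (2 * k)"
    by (simp add: power_mult)
  ultimately show ?thesis
    using pochhammer_double[of "x / 2" k]
    by (simp only: of_nat_numeral of_nat_power) (simp add: mult_ac)
qed

lemma pochhammer_ratio_closed_form:
  fixes a c :: "'a::comm_ring_1"
  assumes "k \<le> n"
  shows "pochhammer a k * pochhammer (a - c - of_nat n) k * pochhammer (1 - a) n
           * pochhammer (1 + c - a) (n - k)
       = pochhammer (1 + c - a) n * pochhammer (a - of_nat n) (2 * k)
           * pochhammer (1 - a - of_nat k) (n - k)"
proof -
  have even_sign: "(-1 :: 'a) ^ (2 * k) = 1"
    by (simp add: power_mult)
  have n_minus_k: "of_nat (n - k) = (of_nat n - of_nat k :: 'a)"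
    using assms by simp
  have split_1ca: "pochhammer (1 + c - a) n
      = (-1) ^ k * pochhammer (1 + c - a) (n - k) * pochhammer (a - c - of_nat n) k"
    using pochhammer_product[of "n - k" n "1 + c - a"] assms
      pochhammer_reflect[of "a - c - of_nat n" k]
    by (simp add: n_minus_k algebra_simps)
  have "(-1) ^ k * pochhammer a k * pochhammer (1 - a) n
      = pochhammer (1 - a - of_nat k) (k + n)"
    using pochhammer_product'[of "1 - a - of_nat k" k n] pochhammer_reflect[of a k] by simp
  also have "\<dots> = pochhammer (1 - a - of_nat k) (n - k)
                     * pochhammer (1 - (a - of_nat n) - of_nat (2 * k)) (2 * k)"
  proof -
    have "k + n = (n - k) + 2 * k"
      using assms by simp
    moreover have "1 - a - of_nat k + of_nat (n - k) = 1 - (a - of_nat n) - of_nat (2 * k)"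
      by (simp add: n_minus_k)
    ultimately show ?thesis
      by (simp only: pochhammer_product')
  qed
  also have "\<dots> = pochhammer (1 - a - of_nat k) (n - k) * pochhammer (a - of_nat n) (2 * k)"
    by (simp only: pochhammer_reflect even_sign mult_1)
  finally have split_1a: "(-1) ^ k * pochhammer a k * pochhammer (1 - a) n
      = pochhammer (1 - a - of_nat k) (n - k) * pochhammer (a - of_nat n) (2 * k)" .
  have sign: "((-1) ^ k * (-1) ^ k :: 'a) = 1"
    by (simp flip: power_mult_distrib)
  have "pochhammer (1 + c - a) n * pochhammer (a - of_nat n) (2 * k)
          * pochhammer (1 - a - of_nat k) (n - k)
      = pochhammer (1 + c - a) n * ((-1) ^ k * pochhammer a k * pochhammer (1 - a) n)"
    using split_1a by (simp add: mult_ac)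
  also have "\<dots> = ((-1) ^ k * (-1) ^ k) * pochhammer a k * pochhammer (a - c - of_nat n) k
                     * pochhammer (1 - a) n * pochhammer (1 + c - a) (n - k)"
    using split_1ca by (simp add: mult_ac)
  finally show ?thesis
    by (simp only: sign mult_1)
qed

lemma pochhammer_ratio_eq_vandermonde_sum:
  fixes a c :: "'a::field_char_0"
  assumes "k \<le> n" and "pochhammer (1 + c - a) n \<noteq> 0"
  shows "pochhammer a k * pochhammer (a - c - of_nat n) k * pochhammer (1 - a) n
       = pochhammer (1 + c - a) n * pochhammer (a - of_nat n) (2 * k)
         * (\<Sum>j=0..n-k. pochhammer (c + of_nat k) j * pochhammer (- of_nat (n - k)) j
                          / (of_nat (fact j) * pochhammer (1 + c - a) j))"
proof -
  have "\<forall>i\<in>{0..<n-k}. 1 + c - a \<noteq> - of_nat i"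
    using assms(2) by (auto simp: pochhammer_eq_0_iff)
  from Vandermonde_pochhammer[OF this, of "c + of_nat k"]
  have vandermonde: "(\<Sum>j=0..n-k. pochhammer (c + of_nat k) j * pochhammer (- of_nat (n - k)) j
                      / (of_nat (fact j) * pochhammer (1 + c - a) j))
      = pochhammer (1 - a - of_nat k) (n - k) / pochhammer (1 + c - a) (n - k)"
    by (simp add: algebra_simps)
  moreover have "pochhammer (1 + c - a) (n - k) \<noteq> 0"
    using assms pochhammer_eq_0_mono by (metis diff_le_self)
  ultimately show ?thesis
    unfolding vandermonde
    using pochhammer_ratio_closed_form[OF assms(1), of a c] by (simp add: field_simps)
qed

definition double_hypergeom :: "nat \<Rightarrow> 'a \<Rightarrow> 'a \<Rightarrow> 'a \<Rightarrow> 'a::field_char_0" where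
  "double_hypergeom n c \<beta> \<gamma> =
     (\<Sum>k\<le>n. \<Sum>j\<le>n. pochhammer (- of_nat n) (k + j) * pochhammer c (k + j)
                      / (fact k * fact j * pochhammer \<beta> k * pochhammer \<gamma> j))"

lemma double_hypergeom_commute: "double_hypergeom n c \<beta> \<gamma> = double_hypergeom n c \<gamma> \<beta>"
  unfolding double_hypergeom_def by (subst sum.swap) (simp add: add.commute mult_ac)

lemma double_hypergeom_eq_row_sums:
  "double_hypergeom n c \<beta> \<gamma> =
     (\<Sum>k\<le>n. pochhammer (- of_nat n) k * pochhammer c k / (fact k * pochhammer \<beta> k)
       * (\<Sum>j=0..n-k. pochhammer (c + of_nat k) j * pochhammer (- of_nat (n - k)) j
                       / (of_nat (fact j) * pochhammer \<gamma> j)))"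
  unfolding double_hypergeom_def
proof (rule sum.cong)
  fix k assume "k \<in> {..n}"
  then have n_minus_k: "- of_nat (n - k) = (- of_nat n + of_nat k :: 'a)"
    by simp
  have "(\<Sum>j\<le>n. pochhammer (- of_nat n) (k + j) * pochhammer c (k + j)
                  / (fact k * fact j * pochhammer \<beta> k * pochhammer \<gamma> j))
      = (\<Sum>j=0..n-k. pochhammer (- of_nat n) (k + j) * pochhammer c (k + j)
                  / (fact k * fact j * pochhammer \<beta> k * pochhammer \<gamma> j))"
    by (rule sum.mono_neutral_right) (auto simp: pochhammer_of_nat_eq_0_iff)
  then show "(\<Sum>j\<le>n. pochhammer (- of_nat n) (k + j) * pochhammer c (k + j)
                  / (fact k * fact j * pochhammer \<beta> k * pochhammer \<gamma> j))
      = pochhammer (- of_nat n) k * pochhammer c k / (fact k * pochhammer \<beta> k)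
        * (\<Sum>j=0..n-k. pochhammer (c + of_nat k) j * pochhammer (- of_nat (n - k)) j
                        / (of_nat (fact j) * pochhammer \<gamma> j))"
    by (simp add: sum_distrib_left pochhammer_product' n_minus_k mult_ac)
qed simp

lemma admissible_lower_pochhammer_nonzero: "admissible_lower x \<Longrightarrow> pochhammer x k \<noteq> 0"
  unfolding admissible_lower_def by (auto simp: pochhammer_eq_0_iff)

lemma hypergeom_terminating:
  "hypergeom (- of_nat n # as) bs z = (\<Sum>k\<le>n. hyp_term (- of_nat n # as) bs z k)"
  unfolding hypergeom_def
  by (rule suminf_finite) (auto simp: hyp_term_def pochhammer_of_nat_eq_0_iff)

lemma hypergeom_4F3_eq_double_hypergeom:
  fixes n :: nat and a b c :: complex
  assumes "admissible_lower ((a - of_nat n) / 2)"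
    and "admissible_lower ((1 + a - of_nat n) / 2)"
    and "admissible_lower b"
    and "admissible_lower (1 + c - a)"
  shows "pochhammer (1 - a) n * hypergeom [- of_nat n, a, a - c - of_nat n, c]
                   [(a - of_nat n) / 2, (1 + a - of_nat n) / 2, b] (1/4)
       = pochhammer (1 + c - a) n * double_hypergeom n c b (1 + c - a)"
proof -
  have "pochhammer (1 - a) n * hyp_term [- of_nat n, a, a - c - of_nat n, c]
                   [(a - of_nat n) / 2, (1 + a - of_nat n) / 2, b] (1/4) k
      = pochhammer (1 + c - a) n
        * (pochhammer (- of_nat n) k * pochhammer c k / (fact k * pochhammer b k)
           * (\<Sum>j=0..n-k. pochhammer (c + of_nat k) j * pochhammer (- of_nat (n - k)) j
                           / (of_nat (fact j) * pochhammer (1 + c - a) j)))"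
    if "k \<le> n" for k
  proof -
    have duplication: "pochhammer ((a - of_nat n) / 2) k * pochhammer ((1 + a - of_nat n) / 2) k
        * 4 ^ k = pochhammer (a - of_nat n) (2 * k)"
      using pochhammer_double_halves[of "a - of_nat n" k] by (simp add: add_diff_eq)
    have half_nonzero: "pochhammer ((a - of_nat n) / 2) k \<noteq> 0"
        "pochhammer ((1 + a - of_nat n) / 2) k \<noteq> 0"
      using assms(1,2) by (simp_all add: admissible_lower_pochhammer_nonzero)
    then have "pochhammer (a - of_nat n) (2 * k) \<noteq> 0"
      by (simp flip: duplication)
    have "pochhammer b k \<noteq> 0" "pochhammer (1 + c - a) n \<noteq> 0"
      using assms(3,4) by (simp_all add: admissible_lower_pochhammer_nonzero)
    have "hyp_term [- of_nat n, a, a - c - of_nat n, c]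
                       [(a - of_nat n) / 2, (1 + a - of_nat n) / 2, b] (1/4) k
        = pochhammer (- of_nat n) k * pochhammer c k / (fact k * pochhammer b k)
          * (pochhammer a k * pochhammer (a - c - of_nat n) k / pochhammer (a - of_nat n) (2 * k))"
      unfolding hyp_term_def duplication[symmetric]
      using half_nonzero \<open>pochhammer b k \<noteq> 0\<close> by (simp add: field_simps)
    moreover have "pochhammer (1 - a) n
          * (pochhammer a k * pochhammer (a - c - of_nat n) k / pochhammer (a - of_nat n) (2 * k))
        = pochhammer (1 + c - a) n
          * (\<Sum>j=0..n-k. pochhammer (c + of_nat k) j * pochhammer (- of_nat (n - k)) j
                          / (of_nat (fact j) * pochhammer (1 + c - a) j))"
      using pochhammer_ratio_eq_vandermonde_sum[OF that, where a = a and c = c]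
        \<open>pochhammer (a - of_nat n) (2 * k) \<noteq> 0\<close>
        \<open>pochhammer (1 + c - a) n \<noteq> 0\<close>
      by (simp add: field_simps)
    ultimately show ?thesis
      by (simp only: mult.left_commute[of "pochhammer (1 - a) n"]
          mult.left_commute[of "pochhammer (1 + c - a) n"])
  qed
  then show ?thesis
    by (simp add: hypergeom_terminating double_hypergeom_eq_row_sums sum_distrib_left)
qed

theorem proposition5p1:
  fixes n :: nat and a b c :: complex
  assumes "admissible_lower ((a - of_nat n) / 2)"
    and "admissible_lower ((1 + a - of_nat n) / 2)"
    and "admissible_lower b"
    and "admissible_lower ((1 + c - b - of_nat n) / 2)"
    and "admissible_lower ((2 + c - b - of_nat n) / 2)"
    and "admissible_lower (1 + c - a)"
    and "pochhammer (1 - a) n \<noteq> 0"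
    and "pochhammer b n \<noteq> 0"
  shows "hypergeom [- of_nat n, a, a - c - of_nat n, c]
                   [(a - of_nat n) / 2, (1 + a - of_nat n) / 2, b] (1/4)
       = pochhammer (1 + c - a) n * pochhammer (b - c) n / (pochhammer (1 - a) n * pochhammer b n)
         * hypergeom [- of_nat n, 1 + c - b, 1 - b - of_nat n, c]
                     [(1 + c - b - of_nat n) / 2, (2 + c - b - of_nat n) / 2, 1 + c - a] (1/4)"
proof -
  have lhs: "pochhammer (1 - a) n * hypergeom [- of_nat n, a, a - c - of_nat n, c]
                   [(a - of_nat n) / 2, (1 + a - of_nat n) / 2, b] (1/4)
      = pochhammer (1 + c - a) n * double_hypergeom n c b (1 + c - a)"
    using hypergeom_4F3_eq_double_hypergeom assms(1-3,6) .
  have rhs: "pochhammer (b - c) n * hypergeom [- of_nat n, 1 + c - b, 1 - b - of_nat n, c]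
                     [(1 + c - b - of_nat n) / 2, (2 + c - b - of_nat n) / 2, 1 + c - a] (1/4)
      = pochhammer b n * double_hypergeom n c (1 + c - a) b"
    using hypergeom_4F3_eq_double_hypergeom[of "1 + c - b" n "1 + c - a" c] assms(3-6)
    by (simp add: algebra_simps)
  show ?thesis
    using lhs rhs assms(7,8) by (simp add: double_hypergeom_commute field_simps)
qed

end
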